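(* Let $X$ be a $T_1$ topological space. The following are equivalent: (i) $C_c(X)_F=C_c(X)$; (ii) $X$ is discrete; (iii) $C_c(X)_F$ is a quotient ring of $C_c(X)$, i.e. for every nonzero $s\in C_c(X)_F$ there exists $r\in C_c(X)$ with $0\neq sr\in C_c(X)$.
   Context: $C_c(X)_F$ denotes the set of all functions $f:X\to\mathbb{R}$ whose range is countable and whose set of points of discontinuity is finite; $C_c(X)$ denotes the ring of continuous functions $X\to\mathbb{R}$ with countable range, a subring of $C_c(X)_F$. *)

theory Defs
  imports "HOL-Analysis.Analysis"
begin

definition CcF :: "('a::topological_space \<Rightarrow> real) set" where
  "CcF = {f. countable (range f) \<and> finite {x. \<not> (f \<longlongrightarrow> f x) (at x)}}"

definition Cc :: "('a::topological_space \<Rightarrow> real) set" where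
  "Cc = {f. continuous_on UNIV f \<and> countable (range f)}"

definition discrete_space :: "'a::topological_space itself \<Rightarrow> bool" where
  "discrete_space _ \<longleftrightarrow> (\<forall>S::'a set. open S)"

end

theory Submission
  imports Defs
begin

text \<open>In a discrete space every function is continuous, so the two rings coincide and
  \<open>r = 1\<close> witnesses the quotient property. Otherwise some point \<open>x\<close> is not isolated; the
  indicator of \<open>{x}\<close> lies in \<open>C\<^sub>c(X)\<^sub>F\<close> (it is continuous off \<open>x\<close> since \<open>X\<close> is \<open>T\<^sub>1\<close>),
  and its product with any \<open>r\<close> is the constant multiple \<open>r(x)\<close> of it, which is
  discontinuous at \<open>x\<close> unless it vanishes.\<close>

lemma discrete_space_iff_open_singletons:
  "discrete_space TYPE('a::topological_space) \<longleftrightarrow> (\<forall>x::'a. open {x})"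
proof
  assume "\<forall>x::'a. open {x}"
  then have "open (S::'a set)" for S
    using open_UN[of S "\<lambda>x. {x}"] by simp
  then show "discrete_space TYPE('a)"
    by (simp add: discrete_space_def)
qed (simp add: discrete_space_def)

lemma tendsto_self_at_discrete:
  assumes "discrete_space TYPE('a::topological_space)"
  shows "((f::'a \<Rightarrow> 'b::topological_space) \<longlongrightarrow> f x) (at x)"
proof -
  have "at x = bot"
    using assms by (simp add: discrete_space_iff_open_singletons at_eq_bot_iff)
  then show ?thesis
    by simp
qed

lemma CcF_eq_Cc_if_discrete:
  assumes "discrete_space TYPE('a::topological_space)"
  shows "(CcF :: ('a \<Rightarrow> real) set) = Cc"
  using tendsto_self_at_discrete[OF assms] by (auto simp: CcF_def Cc_def continuous_on_def)

lemma indicator_singleton_in_CcF: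
  fixes x :: "'a::t1_space"
  shows "(indicator {x} :: 'a \<Rightarrow> real) \<in> CcF"
proof -
  have "countable (range (indicator {x} :: 'a \<Rightarrow> real))"
    by (rule countable_subset[of _ "{0, 1}"]) (auto simp: indicator_def)
  moreover have "((indicator {x} :: 'a \<Rightarrow> real) \<longlongrightarrow> indicator {x} y) (at y)" if "y \<noteq> x" for y
  proof (rule tendsto_eventually)
    have "eventually (\<lambda>z. z \<in> - {x}) (at y)"
      using that by (intro eventually_at_in_open') auto
    then show "eventually (\<lambda>z. indicator {x} z = (indicator {x} y :: real)) (at y)"
      by eventually_elim (use that in auto)
  qed
  then have "{y. \<not> ((indicator {x} :: 'a \<Rightarrow> real) \<longlongrightarrow> indicator {x} y) (at y)} \<subseteq> {x}"
    by blast
  ultimately show ?thesis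
    by (auto simp: CcF_def intro: finite_subset)
qed

lemma not_continuous_scaled_indicator_singleton:
  assumes "\<not> open {x}" and "c \<noteq> 0"
  shows "\<not> continuous_on UNIV (\<lambda>y. indicator {x} y * c :: real)"
proof
  assume "continuous_on UNIV (\<lambda>y. indicator {x} y * c :: real)"
  then have "((\<lambda>y. indicator {x} y * c :: real) \<longlongrightarrow> indicator {x} x * c) (at x)"
    unfolding continuous_on_def by blast
  then have "((\<lambda>y. indicator {x} y * c :: real) \<longlongrightarrow> c) (at x)"
    by simp
  moreover have "((\<lambda>y. indicator {x} y * c :: real) \<longlongrightarrow> 0) (at x)"
    by (rule tendsto_eventually) (simp add: eventually_at_filter)
  moreover have "at x \<noteq> bot"
    using assms(1) by (simp add: at_eq_bot_iff)
  ultimately show False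
    using tendsto_unique assms(2) by blast
qed

lemma CcF_neq_Cc_if_not_discrete:
  assumes "\<not> discrete_space TYPE('a::t1_space)"
  shows "(CcF :: ('a \<Rightarrow> real) set) \<noteq> Cc"
proof -
  obtain x :: 'a where "\<not> open {x}"
    using assms discrete_space_iff_open_singletons by blast
  then have "(indicator {x} :: 'a \<Rightarrow> real) \<notin> Cc"
    using not_continuous_scaled_indicator_singleton[of x 1] by (simp add: Cc_def)
  then show ?thesis
    using indicator_singleton_in_CcF by blast
qed

lemma no_Cc_multiple_if_not_discrete:
  assumes "\<not> discrete_space TYPE('a)"
  obtains s :: "'a::t1_space \<Rightarrow> real" where "s \<in> CcF" "s \<noteq> (\<lambda>_. 0)"
    "\<And>r. (\<lambda>y. s y * r y) \<noteq> (\<lambda>_. 0) \<Longrightarrow> (\<lambda>y. s y * r y) \<notin> Cc"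
proof -
  obtain x :: 'a where x: "\<not> open {x}"
    using assms discrete_space_iff_open_singletons by blast
  show thesis
  proof (rule that)
    show "(indicator {x} :: 'a \<Rightarrow> real) \<in> CcF"
      by (rule indicator_singleton_in_CcF)
    show "(indicator {x} :: 'a \<Rightarrow> real) \<noteq> (\<lambda>_. 0)"
      by (metis indicator_simps(1) singletonI zero_neq_one)
    fix r :: "'a \<Rightarrow> real"
    assume "(\<lambda>y. indicator {x} y * r y) \<noteq> (\<lambda>_. 0)"
    moreover have multiple: "(\<lambda>y. indicator {x} y * r y) = (\<lambda>y. indicator {x} y * r x)"
      by (auto simp: indicator_def)
    ultimately have "r x \<noteq> 0"
      by auto
    then show "(\<lambda>y. indicator {x} y * r y) \<notin> Cc"
      using not_continuous_scaled_indicator_singleton[OF x] multiple by (simp add: Cc_def)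
  qed
qed

theorem theorem5p1:
  shows "((CcF :: ('a::t1_space \<Rightarrow> real) set) = Cc \<longleftrightarrow> discrete_space TYPE('a))
    \<and> (discrete_space TYPE('a) \<longleftrightarrow>
        (\<forall>s \<in> (CcF :: ('a \<Rightarrow> real) set). s \<noteq> (\<lambda>_. 0) \<longrightarrow>
           (\<exists>r \<in> Cc. (\<lambda>x. s x * r x) \<noteq> (\<lambda>_. 0) \<and> (\<lambda>x. s x * r x) \<in> Cc)))"
proof -
  have "\<exists>r \<in> Cc. (\<lambda>x. s x * r x) \<noteq> (\<lambda>_. 0) \<and> (\<lambda>x. s x * r x) \<in> Cc"
    if "discrete_space TYPE('a)" "s \<in> CcF" "s \<noteq> (\<lambda>_. 0)" for s :: "'a \<Rightarrow> real"
    using that CcF_eq_Cc_if_discrete by (intro bexI[of _ "\<lambda>_. 1"]) (auto simp: Cc_def)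
  moreover have "\<not> (\<forall>s \<in> (CcF :: ('a \<Rightarrow> real) set). s \<noteq> (\<lambda>_. 0) \<longrightarrow>
      (\<exists>r \<in> Cc. (\<lambda>x. s x * r x) \<noteq> (\<lambda>_. 0) \<and> (\<lambda>x. s x * r x) \<in> Cc))"
    if "\<not> discrete_space TYPE('a)"
    using no_Cc_multiple_if_not_discrete[OF that] by metis
  ultimately show ?thesis
    using CcF_eq_Cc_if_discrete CcF_neq_Cc_if_not_discrete by blast
qed

end
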